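(* For every closed point $v$ of $\mathscr C$, $$\sum_{(e_0,\boldsymbol e,\boldsymbol f)\in\{0,1\}^7}\mu^0_S(e_0,\boldsymbol e,\boldsymbol f)\,\mathrm{fact}_v(e_0,\boldsymbol e,\boldsymbol f)=\sum_{(e_0,\boldsymbol e,\boldsymbol f)\in\{0,1\}^7}\mu^0_S(e_0,\boldsymbol e,\boldsymbol f)\,\mathrm{dens}_{S,v}(e_0,\boldsymbol e,\boldsymbol f).$$
   Context: $k$ is a finite field, $\mathscr C$ a smooth projective geometrically integral curve over $k$; for a closed point $v$, $\kappa_v$ is its residue field and $q_v=\#\kappa_v$. Elements of $\{0,1\}^7$ are written $(e_0,\boldsymbol e,\boldsymbol f)$, $\boldsymbol e=(e_1,e_2,e_3)$, $\boldsymbol f=(f_1,f_2,f_3)$; $i,j\in\{1,2,3\}$. Let $\{0,1\}^7_S$ be the set of $(e_0,\boldsymbol e,\boldsymbol f)$ with $\min\big((\sum_{j\neq i}e_j+\sum_jf_j)_i,(e_0+\sum_{j\neq i}(e_j+f_j))_i,e_0+\sum_ie_i\big)=0$. Let $\operatorname{Div}_{S,\mathrm{prim}}$ be the set of $(\mathcal E_0,\mathcal E_1,\mathcal E_2,\mathcal E_3,\mathcal F_1,\mathcal F_2,\mathcal F_3)\in\operatorname{Div}_{\mathrm{eff}}(\mathscr C)^7$ for which the gcd (minimum of multiplicities at each closed point) of $\sum_{j\neq i}\mathcal E_j+\sum_j\mathcal F_j$ ($i=1,2,3$), $\mathcal E_0+\sum_{j\neq i}(\mathcal E_j+\mathcal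 F_j)$ ($i=1,2,3$) and $\mathcal E_0+\sum_i\mathcal E_i$ is $0$; $\mu_S$ is the unique function on $\operatorname{Div}_{\mathrm{eff}}(\mathscr C)^7$ with $\mathbf 1_{\operatorname{Div}_{S,\mathrm{prim}}}(\boldsymbol{\mathcal D})=\sum_{0\leq\boldsymbol{\mathcal E}\leq\boldsymbol{\mathcal D}}\mu_S(\boldsymbol{\mathcal E})$; and for $\boldsymbol n\in\{0,1\}^7$, $\mu^0_S(\boldsymbol n)=\mu_S((n_\alpha v)_\alpha)$, which is independent of the closed point $v$ (equivalently, $\mu^0_S$ is the unique function on $\{0,1\}^7$ with $\mathbf 1_{\{0,1\}^7_S}(\boldsymbol n)=\sum_{\boldsymbol m\leq\boldsymbol n}\mu^0_S(\boldsymbol m)$). For $\boldsymbol\nu\in\mathbf N^3$, $F_{\boldsymbol\nu}(\rho,\boldsymbol T)=\sum_{\boldsymbol n\in\mathbf N^3}\rho^{\min_i(n_i+\nu_i)}\prod_iT_i^{n_i}$ and $\widetilde F_{\boldsymbol\nu}(\rho,\boldsymbol T)=(1-\rho T_1T_2T_3)\prod_i(1-T_i)F_{\boldsymbol\nu}(\rho,\boldsymbol T)$ (a polynomial in $\boldsymbol T$). Define $$\mathrm{fact}_v(e_0,\boldsymbol e,\boldsymbol f)=\frac{1}{1-q_v^{-2}}\,q_v^{-e_0-\sum_i(e_i+f_i)}\,\widetilde F_{(e_i+f_i)_i}\big(q_v,(q_v^{-1},q_v^{-1},q_v^{-1})\big).$$ For $\boldsymbol n=(e_0,\boldsymbol e,\boldsymbol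 f)\in\{0,1\}^7$ let $\kappa_v^{\boldsymbol n}$ be the set of $(x_0,x_1,x_2,x_3,y_1,y_2,y_3)\in\kappa_v^7$ whose coordinates vanish at the positions where $\boldsymbol n$ has entry $1$, and $$\mathrm{dens}_{S,v}(e_0,\boldsymbol e,\boldsymbol f)=q_v^{-6}\,\#\{(x_0,\boldsymbol x,\boldsymbol y)\in\kappa_v^{(e_0,\boldsymbol e,\boldsymbol f)}:\ x_1y_1+x_2y_2+x_3y_3=0\}.$$ *)

theory Defs
  imports "HOL-Analysis.Analysis"
begin

text \<open>Index 0 is e_0, indices 1,2,3 are e_1,e_2,e_3,
  indices 4,5,6 are f_1,f_2,f_3 (so f_i is at index i+3).\<close>

definition B7 :: "(nat \<Rightarrow> nat) set" where
  "B7 = {n. (\<forall>i<7. n i \<in> {0,1}) \<and> (\<forall>i\<ge>7. n i = 0)}"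

definition formA :: "(nat \<Rightarrow> nat) \<Rightarrow> nat \<Rightarrow> nat" where
  "formA n i = (\<Sum>j\<in>{1,2,3} - {i}. n j) + (\<Sum>j\<in>{1,2,3}. n (j+3))"

definition formB :: "(nat \<Rightarrow> nat) \<Rightarrow> nat \<Rightarrow> nat" where
  "formB n i = n 0 + (\<Sum>j\<in>{1,2,3} - {i}. n j + n (j+3))"

definition formC :: "(nat \<Rightarrow> nat) \<Rightarrow> nat" where
  "formC n = n 0 + (\<Sum>j\<in>{1,2,3}. n j)"

definition B7S :: "(nat \<Rightarrow> nat) set" where
  "B7S = {n\<in>B7. min (Min ((\<lambda>i. formA n i) ` {1,2,3}))
                    (min (Min ((\<lambda>i. formB n i) ` {1,2,3})) (formC n)) = 0}"

definition mu0S :: "(nat \<Rightarrow> nat) \<Rightarrow> int" where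
  "mu0S = (THE \<mu>. (\<forall>n. n \<notin> B7 \<longrightarrow> \<mu> n = 0) \<and>
              (\<forall>n\<in>B7. (if n \<in> B7S then 1 else 0) = (\<Sum>m\<in>{m\<in>B7. \<forall>i. m i \<le> n i}. \<mu> m)))"

text \<open>F_nu(rho, T) = sum over n in N^3 of rho^(min_i (n_i+nu_i)) * prod_i T_i^(n_i), as a real series
  (used only at points where it converges absolutely).\<close>
definition Fser :: "nat \<times> nat \<times> nat \<Rightarrow> real \<Rightarrow> real \<times> real \<times> real \<Rightarrow> real" where
  "Fser \<nu> \<rho> T = (case \<nu> of (\<nu>1, \<nu>2, \<nu>3) \<Rightarrow> case T of (T1, T2, T3) \<Rightarrow>
     infsum (\<lambda>(n1::nat, n2::nat, n3::nat).
        \<rho> ^ (min (n1 + \<nu>1) (min (n2 + \<nu>2) (n3 + \<nu>3))) * T1 ^ n1 * T2 ^ n2 * T3 ^ n3) UNIV)"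

definition Ftilde :: "nat \<times> nat \<times> nat \<Rightarrow> real \<Rightarrow> real \<times> real \<times> real \<Rightarrow> real" where
  "Ftilde \<nu> \<rho> T = (case T of (T1, T2, T3) \<Rightarrow>
     (1 - \<rho> * T1 * T2 * T3) * (1 - T1) * (1 - T2) * (1 - T3) * Fser \<nu> \<rho> T)"

text \<open>fact_v, with q = q_v = #kappa_v.\<close>
definition factv :: "nat \<Rightarrow> (nat \<Rightarrow> nat) \<Rightarrow> real" where
  "factv q n = (1 / (1 - real q powi (-2))) *
      real q powi (- int (n 0 + (\<Sum>i\<in>{1,2,3}. n i + n (i+3)))) *
      Ftilde (n 1 + n 4, n 2 + n 5, n 3 + n 6) (real q) (1 / real q, 1 / real q, 1 / real q)"

text \<open>dens_{S,v}, with kappa_v the finite field 'a; points of kappa_v^7 are functions on {0..<7}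
  (index layout as above: x_0, x_1,x_2,x_3, y_1,y_2,y_3).\<close>
definition densS :: "'a::{finite,field} itself \<Rightarrow> (nat \<Rightarrow> nat) \<Rightarrow> real" where
  "densS _ n = real CARD('a) powi (-6) *
     real (card {x \<in> {0..<7} \<rightarrow>\<^sub>E (UNIV :: 'a set).
                   (\<forall>i<7. n i = 1 \<longrightarrow> x i = 0) \<and>
                   x 1 * x 4 + x 2 * x 5 + x 3 * x 6 = 0})"

end

theory Submission
  imports Defs "HOL-Computational_Algebra.Polynomial"
begin

text \<open>After multiplication by \<open>q^12 - q^10 = q^12 (1 - q^-2)\<close>, both \<open>fact\<^sub>v\<close> and \<open>dens\<^sub>S\<^sub>,\<^sub>v\<close> become
  integer polynomials in \<open>q = q\<^sub>v\<close>. For \<open>fact\<^sub>v\<close> this comes from a closed form of \<open>F\<^sub>\<nu>\<close> on the diagonal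
  \<open>T\<^sub>i = 1/q\<close>: split \<open>\<rho>^m\<close> into the increments \<open>\<rho>^s - \<rho>^(s-1)\<close> and sum the resulting geometric
  tails first. For \<open>dens\<^sub>S\<^sub>,\<^sub>v\<close> it comes from counting the solutions of \<open>x\<^sub>1y\<^sub>1 + x\<^sub>2y\<^sub>2 + x\<^sub>3y\<^sub>3 = 0\<close> one
  pair \<open>(x\<^sub>i, y\<^sub>i)\<close> at a time. Finally \<open>\<mu>\<^sup>0\<^sub>S\<close> is the Moebius transform of the indicator of
  \<open>{0,1}\<^sup>7\<^sub>S\<close> on the Boolean lattice, so both weighted sums are explicit combinations of 128 integer
  polynomials, which agree by direct evaluation.\<close>

section \<open>The series \<open>F\<^sub>\<nu>\<close> on the diagonal\<close>

lemma has_sum_Sigma_nonneg: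
  fixes g :: "'a \<times> 'b \<Rightarrow> real"
  assumes nonneg: "\<And>p. 0 \<le> g p"
    and rows: "\<And>s. ((\<lambda>n. g (s, n)) has_sum b s) UNIV"
    and total: "(b has_sum S) UNIV"
  shows "(g has_sum S) UNIV"
proof -
  have b_nonneg: "0 \<le> b s" for s
    using has_sum_nonneg[OF rows[of s]] nonneg by auto
  have bounded: "sum g F \<le> S" if "finite F" for F
  proof -
    let ?A = "fst ` F" and ?B = "snd ` F"
    have "sum g F \<le> sum g (?A \<times> ?B)"
      by (intro sum_mono2) (use that nonneg in force)+
    also have "\<dots> = (\<Sum>s\<in>?A. \<Sum>n\<in>?B. g (s, n))"
      by (simp add: sum.cartesian_product)
    also have "\<dots> \<le> (\<Sum>s\<in>?A. b s)"
      by (intro sum_mono finite_sum_le_has_sum[OF rows]) (use that nonneg in auto)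
    also have "\<dots> \<le> S"
      by (intro finite_sum_le_has_sum[OF total]) (use that b_nonneg in auto)
    finally show ?thesis .
  qed
  have "g summable_on UNIV"
    by (rule nonneg_bdd_above_summable_on) (use nonneg bounded in \<open>auto intro!: bdd_aboveI2\<close>)
  then have sum_g: "(g has_sum infsum g UNIV) (Sigma UNIV (\<lambda>_. UNIV))"
    by (simp add: summable_iff_has_sum_infsum)
  have "(b has_sum infsum g UNIV) UNIV"
    by (rule has_sum_Sigma[OF isUCont_plus sum_g]) (use rows in auto)
  with total have "S = infsum g UNIV" using has_sum_unique by blast
  with sum_g show ?thesis by simp
qed

lemma has_sum_product_nonneg:
  fixes f :: "'a \<Rightarrow> real" and h :: "'b \<Rightarrow> real"
  assumes "\<And>a. 0 \<le> f a" "\<And>b. 0 \<le> h b"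
    and "(f has_sum F) UNIV" "(h has_sum H) UNIV"
  shows "((\<lambda>(a, b). f a * h b) has_sum (F * H)) UNIV"
  by (rule has_sum_Sigma_nonneg[where b="\<lambda>a. f a * H"])
     (use assms in \<open>auto intro: has_sum_cmult_right has_sum_cmult_left\<close>)

lemma has_sum_geometric_tail:
  fixes x :: real
  assumes "0 \<le> x" "x < 1"
  shows "((\<lambda>n. if k \<le> n then x ^ n else 0) has_sum (x ^ k / (1 - x))) UNIV"
proof -
  have "(\<lambda>n. x ^ k * x ^ n) sums (x ^ k * (1 / (1 - x)))"
    by (intro sums_mult geometric_sums) (use assms in auto)
  then have "(\<lambda>n. (\<lambda>n. if k \<le> n then x ^ n else 0) (n + k)) sums (x ^ k / (1 - x))"
    by (simp add: power_add mult.commute)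
  then have "(\<lambda>n. if k \<le> n then x ^ n else 0) sums (x ^ k / (1 - x))"
    by (subst (asm) sums_iff_shift) simp
  then show ?thesis
    by (rule sums_nonneg_imp_has_sum) (use assms in auto)
qed

fun pow_increment :: "real \<Rightarrow> nat \<Rightarrow> real" where
  "pow_increment q 0 = 1"
| "pow_increment q (Suc s) = q ^ Suc s - q ^ s"

lemma sum_pow_increment: "(\<Sum>s\<le>m. pow_increment q s) = q ^ m"
  by (induction m) auto

lemma pow_increment_nonneg: "1 \<le> q \<Longrightarrow> 0 \<le> pow_increment q s"
  by (cases s) (auto intro: power_increasing)

lemma has_sum_geometric_tails3:
  fixes x y z :: real
  assumes "0 \<le> x" "x < 1" "0 \<le> y" "y < 1" "0 \<le> z" "z < 1"
  shows "((\<lambda>(n1, n2, n3). (if k1 \<le> n1 then x ^ n1 else 0) *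
            ((if k2 \<le> n2 then y ^ n2 else 0) * (if k3 \<le> n3 then z ^ n3 else 0)))
          has_sum (x ^ k1 / (1 - x) * (y ^ k2 / (1 - y) * (z ^ k3 / (1 - z))))) UNIV"
proof -
  have "((\<lambda>(n2, n3). (if k2 \<le> n2 then y ^ n2 else 0) * (if k3 \<le> n3 then z ^ n3 else 0))
          has_sum (y ^ k2 / (1 - y) * (z ^ k3 / (1 - z)))) UNIV"
    by (rule has_sum_product_nonneg) (use assms in \<open>auto intro!: has_sum_geometric_tail\<close>)
  then have "((\<lambda>(n1, n23). (if k1 \<le> n1 then x ^ n1 else 0) *
            (\<lambda>(n2, n3). (if k2 \<le> n2 then y ^ n2 else 0) * (if k3 \<le> n3 then z ^ n3 else 0)) n23)
          has_sum (x ^ k1 / (1 - x) * (y ^ k2 / (1 - y) * (z ^ k3 / (1 - z))))) UNIV"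
    by (intro has_sum_product_nonneg) (use assms in \<open>auto intro!: has_sum_geometric_tail\<close>)
  then show ?thesis
    by (rule has_sum_cong[THEN iffD1, rotated]) auto
qed

lemma has_sum_pow_increment:
  "((\<lambda>s. if s \<le> m then pow_increment \<rho> s * w else 0) has_sum (\<rho> ^ m * w)) UNIV"
proof -
  have "((\<lambda>s. pow_increment \<rho> s * w) has_sum (\<Sum>s\<le>m. pow_increment \<rho> s * w)) {..m}"
    by (rule has_sum_finite) simp
  moreover have "(\<Sum>s\<le>m. pow_increment \<rho> s * w) = \<rho> ^ m * w"
    by (simp add: sum_distrib_right[symmetric] sum_pow_increment)
  moreover have "((\<lambda>s. if s \<le> m then pow_increment \<rho> s * w else 0) has_sum (\<rho> ^ m * w)) UNIV
      \<longleftrightarrow> ((\<lambda>s. pow_increment \<rho> s * w) has_sum (\<rho> ^ m * w)) {..m}"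
    by (rule has_sum_cong_neutral) auto
  ultimately show ?thesis by simp
qed

lemma Fser_eq_layer_sum:
  fixes \<rho> x y z :: real
  assumes \<rho>: "1 \<le> \<rho>" and T: "0 \<le> x" "x < 1" "0 \<le> y" "y < 1" "0 \<le> z" "z < 1"
    and layers: "((\<lambda>s. pow_increment \<rho> s *
                    (x ^ (s - a) / (1 - x) * (y ^ (s - b) / (1 - y) * (z ^ (s - c) / (1 - z)))))
                  has_sum S) UNIV"
  shows "Fser (a, b, c) \<rho> (x, y, z) = S"
proof -
  define g :: "nat \<times> nat \<times> nat \<times> nat \<Rightarrow> real" where
    "g = (\<lambda>(s, n1, n2, n3). if s \<le> min (n1 + a) (min (n2 + b) (n3 + c))
                             then pow_increment \<rho> s * (x ^ n1 * (y ^ n2 * z ^ n3)) else 0)"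
  have g_nonneg: "0 \<le> g p" for p
    using pow_increment_nonneg[OF \<rho>] T by (auto simp: g_def split: prod.splits)
  have rows: "((\<lambda>n. g (s, n)) has_sum
      (pow_increment \<rho> s * (x ^ (s - a) / (1 - x) * (y ^ (s - b) / (1 - y) * (z ^ (s - c) / (1 - z))))))
      UNIV" for s
    using has_sum_cmult_right[OF has_sum_geometric_tails3[OF T], of "pow_increment \<rho> s"]
    by (rule has_sum_cong[THEN iffD1, rotated]) (auto simp: g_def)
  have columns: "((\<lambda>s. (g \<circ> prod.swap) (n, s)) has_sum
      (case n of (n1, n2, n3) \<Rightarrow> \<rho> ^ min (n1 + a) (min (n2 + b) (n3 + c)) * x ^ n1 * y ^ n2 * z ^ n3))
      UNIV" for n
  proof -
    obtain n1 n2 n3 where n: "n = (n1, n2, n3)" by (cases n) auto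
    let ?m = "min (n1 + a) (min (n2 + b) (n3 + c))"
    have "(\<lambda>s. (g \<circ> prod.swap) (n, s)) = (\<lambda>s. if s \<le> ?m then pow_increment \<rho> s * (x ^ n1 * (y ^ n2 * z ^ n3)) else 0)"
      by (auto simp: g_def n)
    then show ?thesis
      using has_sum_pow_increment[of ?m \<rho> "x ^ n1 * (y ^ n2 * z ^ n3)"] by (simp add: n mult.assoc)
  qed
  have "(g has_sum S) UNIV"
    by (rule has_sum_Sigma_nonneg[OF g_nonneg rows layers])
  then have swapped: "((g \<circ> prod.swap) has_sum S) UNIV"
    using has_sum_reindex[of prod.swap UNIV g S] by simp
  have "((\<lambda>(n1, n2, n3). \<rho> ^ min (n1 + a) (min (n2 + b) (n3 + c)) * x ^ n1 * y ^ n2 * z ^ n3)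
              has_sum S) UNIV"
    by (rule has_sum_Sigma[OF isUCont_plus, where B="\<lambda>_. UNIV"]) (use swapped columns in auto)
  then show ?thesis
    unfolding Fser_def by (simp add: infsumI)
qed

lemma pow_increment_layer_diagonal:
  fixes q :: real
  assumes q: "1 < q" and \<nu>: "a \<le> 2" "b \<le> 2" "c \<le> 2"
  defines "x \<equiv> 1 / q"
  shows "pow_increment q (t + 2) * (x ^ (t + 2 - a) / (1 - x) * (x ^ (t + 2 - b) / (1 - x) * (x ^ (t + 2 - c) / (1 - x))))
       = q ^ (a + b + c) / (1 - x) ^ 2 * (x ^ 2) ^ (t + 2)"
proof -
  have x: "x < 1" and xq: "x * q = 1"
    using q by (auto simp: x_def)
  have regroup: "Q * y * (P * A / y * (P * B / y * (P * C / y))) = A * B * C / y ^ 2 * (P * P)"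
    if "Q * P = 1" "y \<noteq> 0" for Q P A B C y :: real
  proof -
    have "Q * y * (P * A / y * (P * B / y * (P * C / y))) = (Q * P) * (A * B * C / y ^ 2 * (P * P))"
      using that(2) by (simp add: field_simps power2_eq_square)
    then show ?thesis using that(1) by simp
  qed
  have shift: "x ^ (t + 2 - d) = x ^ (t + 2) * q ^ d" if "d \<le> 2" for d
  proof -
    have "x ^ (t + 2) * q ^ d = x ^ (t + 2 - d) * (x * q) ^ d"
      using that by (simp add: power_mult_distrib flip: power_add)
    then show ?thesis by (simp add: xq)
  qed
  have "pow_increment q (t + 2) = q ^ (t + 2) * (1 - x)"
    using q by (simp add: x_def field_simps)
  moreover have qx: "q ^ (t + 2) * x ^ (t + 2) = 1"
    by (metis power_mult_distrib mult.commute xq power_one)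
  ultimately have "pow_increment q (t + 2) * (x ^ (t + 2 - a) / (1 - x) * (x ^ (t + 2 - b) / (1 - x) * (x ^ (t + 2 - c) / (1 - x))))
      = q ^ (t + 2) * (1 - x) *
        (x ^ (t + 2) * q ^ a / (1 - x) * (x ^ (t + 2) * q ^ b / (1 - x) * (x ^ (t + 2) * q ^ c / (1 - x))))"
    by (simp only: shift \<nu>)
  also have "\<dots> = q ^ a * q ^ b * q ^ c / (1 - x) ^ 2 * (x ^ (t + 2) * x ^ (t + 2))"
    by (rule regroup[OF qx]) (use x in simp)
  finally show ?thesis
    by (simp only: power_add[of q] power2_eq_square[of x] power_mult_distrib)
qed

lemma has_sum_layers_diagonal:
  fixes q :: real
  assumes q: "1 < q" and \<nu>: "a \<le> 2" "b \<le> 2" "c \<le> 2"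
  defines "x \<equiv> 1 / q"
  shows "((\<lambda>s. pow_increment q s * (x ^ (s - a) / (1 - x) * (x ^ (s - b) / (1 - x) * (x ^ (s - c) / (1 - x)))))
     has_sum (1 / (1 - x) ^ 3 + (q - 1) * x ^ ((1 - a) + (1 - b) + (1 - c)) / (1 - x) ^ 3
              + q ^ (a + b + c) * x ^ 4 / ((1 - x) ^ 2 * (1 - x ^ 2)))) UNIV"
    (is "((\<lambda>s. ?L s) has_sum _) UNIV")
proof -
  have x: "0 \<le> x" "x < 1"
    using q by (auto simp: x_def)
  have tail: "?L (t + 2) = q ^ (a + b + c) / (1 - x) ^ 2 * (x ^ 2) ^ (t + 2)" for t
    unfolding x_def by (rule pow_increment_layer_diagonal[OF q \<nu>])
  have "x ^ 2 < 1" using x by (simp add: power_less_one_iff)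
  then have "(\<lambda>t. (x ^ 2) ^ t) sums (1 / (1 - x ^ 2))"
    by (intro geometric_sums) (use x in auto)
  from sums_mult[OF this, of "q ^ (a + b + c) / (1 - x) ^ 2 * (x ^ 2) ^ 2"]
  have "(\<lambda>t. ?L (t + 2)) sums (q ^ (a + b + c) * x ^ 4 / ((1 - x) ^ 2 * (1 - x ^ 2)))"
    unfolding tail power_add[of "x ^ 2"] by (simp add: mult_ac flip: power_mult)
  then have "(\<lambda>s. ?L s) sums (q ^ (a + b + c) * x ^ 4 / ((1 - x) ^ 2 * (1 - x ^ 2)) + (\<Sum>s<2. ?L s))"
    by (subst sums_iff_shift[symmetric])
  moreover have "(\<Sum>s<2. ?L s) = 1 / (1 - x) ^ 3 + (q - 1) * x ^ ((1 - a) + (1 - b) + (1 - c)) / (1 - x) ^ 3"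
    by (simp add: numeral_2_eq_2 power3_eq_cube power_add mult.assoc)
  ultimately have "(\<lambda>s. ?L s) sums (1 / (1 - x) ^ 3 + (q - 1) * x ^ ((1 - a) + (1 - b) + (1 - c)) / (1 - x) ^ 3
              + q ^ (a + b + c) * x ^ 4 / ((1 - x) ^ 2 * (1 - x ^ 2)))"
    by (simp add: algebra_simps)
  then show ?thesis
    by (rule sums_nonneg_imp_has_sum)
       (use pow_increment_nonneg[of q] q x in \<open>auto intro!: mult_nonneg_nonneg divide_nonneg_pos\<close>)
qed

lemma Ftilde_diagonal:
  fixes q :: real
  assumes q: "1 < q" and \<nu>: "a \<le> 2" "b \<le> 2" "c \<le> 2"
  defines "x \<equiv> 1 / q"
  shows "Ftilde (a, b, c) q (x, x, x)
       = (1 - x ^ 2) * (1 + (q - 1) * x ^ ((1 - a) + (1 - b) + (1 - c))) + (1 - x) * q ^ (a + b + c) * x ^ 4"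
proof -
  have x: "0 \<le> x" "x < 1" and xq: "q * x = 1"
    using q by (auto simp: x_def)
  have "x ^ 2 < 1" using x by (simp add: power_less_one_iff)
  then have nonzero: "1 - x ^ 2 \<noteq> 0" "1 - x \<noteq> 0" using x by auto
  have cube: "1 - q * x * x * x = 1 - x ^ 2"
    using xq by (simp add: power2_eq_square mult.assoc)
  have clear_denominators: "w * y * y * y * (1 / y ^ 3 + D * X / y ^ 3 + C * x ^ 4 / (y ^ 2 * w))
      = w * (1 + D * X) + y * C * x ^ 4" if "y \<noteq> 0" "w \<noteq> 0" for y w D X C :: real
    using that by (simp add: field_simps power2_eq_square power3_eq_cube)
  have "Fser (a, b, c) q (x, x, x) = 1 / (1 - x) ^ 3 + (q - 1) * x ^ ((1 - a) + (1 - b) + (1 - c)) / (1 - x) ^ 3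
              + q ^ (a + b + c) * x ^ 4 / ((1 - x) ^ 2 * (1 - x ^ 2))"
    using Fser_eq_layer_sum[OF _ x x x has_sum_layers_diagonal[OF q \<nu>, folded x_def]] q by simp
  then show ?thesis
    unfolding Ftilde_def prod.case cube using clear_denominators[OF nonzero(2,1)] by (simp add: mult.assoc)
qed

section \<open>Polynomial form of \<open>fact\<^sub>v\<close>\<close>

text \<open>The truncated subtractions in the exponents are harmless: on \<open>B7\<close>, \<open>n 0 + V \<le> 7\<close> and \<open>Z \<le> 3\<close>.\<close>
definition fact_poly :: "(nat \<Rightarrow> nat) \<Rightarrow> int poly" where
  "fact_poly n =
     (let V = (n 1 + n 4) + (n 2 + n 5) + (n 3 + n 6);
          Z = (1 - (n 1 + n 4)) + (1 - (n 2 + n 5)) + (1 - (n 3 + n 6))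
      in monom 1 (7 - (n 0 + V)) *
         ([:-1, 0, 1:] * (monom 1 3 + [:-1, 1:] * monom 1 (3 - Z)) + [:-1, 1:] * monom 1 V))"

lemma factv_eq_Ftilde:
  fixes q :: nat and n :: "nat \<Rightarrow> nat"
  defines "x \<equiv> 1 / real q"
  shows "factv q n = 1 / (1 - x ^ 2) * x ^ (n 0 + ((n 1 + n 4) + (n 2 + n 5) + (n 3 + n 6)))
                     * Ftilde (n 1 + n 4, n 2 + n 5, n 3 + n 6) (real q) (x, x, x)"
proof -
  have "n 0 + (\<Sum>i\<in>{1, 2, 3}. n i + n (i + 3)) = n 0 + ((n 1 + n 4) + (n 2 + n 5) + (n 3 + n 6))"
    by simp
  then have "factv q n = 1 / (1 - real q powi (-2)) * real q powi (- int (n 0 + ((n 1 + n 4) + (n 2 + n 5) + (n 3 + n 6))))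
      * Ftilde (n 1 + n 4, n 2 + n 5, n 3 + n 6) (real q) (x, x, x)"
    unfolding factv_def x_def by (simp only:)
  moreover have "real q powi (-2) = x ^ 2" "real q powi (- int k) = x ^ k" for k
    by (simp_all add: x_def power_int_minus power_one_over inverse_eq_divide)
  ultimately show ?thesis by (simp only:)
qed

lemma factv_eq_poly:
  assumes q: "2 \<le> q" and n: "n \<in> B7"
  shows "(real q ^ 12 - real q ^ 10) * factv q n = of_int (poly (fact_poly n) (int q))"
proof -
  define Q x where "Q = real q" and "x = 1 / Q"
  define V Z where "V = (n 1 + n 4) + (n 2 + n 5) + (n 3 + n 6)"
    and "Z = (1 - (n 1 + n 4)) + (1 - (n 2 + n 5)) + (1 - (n 3 + n 6))"
  have le1: "n i \<le> 1" if "i < 7" for i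
    using n that by (auto simp: B7_def)
  have Q: "1 < Q" using q by (simp add: Q_def)
  then have x: "0 \<le> x" "x < 1" "x \<noteq> 0" by (auto simp: x_def)
  have "x ^ 2 < 1" using x by (simp add: power_less_one_iff)
  then have x2: "1 - x ^ 2 \<noteq> 0" by simp
  have bounds: "n 0 + V \<le> 7" "Z \<le> 3"
    using le1[of 0] le1[of 1] le1[of 2] le1[of 3] le1[of 4] le1[of 5] le1[of 6]
    by (auto simp: V_def Z_def)
  have cancel: "Q ^ (j - k) = Q ^ j * x ^ k" if "k \<le> j" for j k
    using Q that by (simp add: x_def power_diff power_one_over)
  have Ftilde: "Ftilde (n 1 + n 4, n 2 + n 5, n 3 + n 6) Q (x, x, x)
      = (1 - x ^ 2) * (1 + (Q - 1) * x ^ Z) + (1 - x) * Q ^ V * x ^ 4"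
    unfolding x_def Z_def V_def
    by (rule Ftilde_diagonal[OF Q])
       (use le1[of 1] le1[of 2] le1[of 3] le1[of 4] le1[of 5] le1[of 6] in auto)
  have "factv q n = 1 / (1 - x ^ 2) * x ^ (n 0 + V) * Ftilde (n 1 + n 4, n 2 + n 5, n 3 + n 6) Q (x, x, x)"
    unfolding V_def x_def Q_def by (rule factv_eq_Ftilde)
  moreover have "Q ^ 12 - Q ^ 10 = Q ^ 12 * (1 - x ^ 2)"
    using Q by (simp add: x_def field_simps)
  ultimately have "(Q ^ 12 - Q ^ 10) * factv q n
      = Q ^ 12 * x ^ (n 0 + V) * ((1 - x ^ 2) * (1 + (Q - 1) * x ^ Z) + (1 - x) * Q ^ V * x ^ 4)"
    using x2 unfolding Ftilde by simp
  also have "\<dots> = Q ^ 7 * x ^ (n 0 + V) * ((Q ^ 2 - 1) * (Q ^ 3 + (Q - 1) * (Q ^ 3 * x ^ Z)) + (Q - 1) * Q ^ V)"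
    using Q by (simp add: x_def field_simps flip: power_Suc)
  also have "\<dots> = Q ^ (7 - (n 0 + V)) * ((Q ^ 2 - 1) * (Q ^ 3 + (Q - 1) * Q ^ (3 - Z)) + (Q - 1) * Q ^ V)"
    unfolding cancel[OF bounds(1)] cancel[OF bounds(2)] by (simp only: mult_ac)
  also have "\<dots> = of_int (poly (fact_poly n) (int q))"
    unfolding fact_poly_def Let_def V_def[symmetric] Z_def[symmetric]
    by (simp add: poly_monom algebra_simps power2_eq_square Q_def)
  finally show ?thesis by (simp add: Q_def)
qed

section \<open>Counting points on the quadric\<close>

lemma sum_PiE_insert:
  assumes "i \<notin> I"
  shows "(\<Sum>x\<in>Pi\<^sub>E (insert i I) T. f x) = (\<Sum>a\<in>T i. \<Sum>g\<in>Pi\<^sub>E I T. f (g(i := a)))"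
  unfolding PiE_insert_eq sum.reindex[OF inj_combinator[OF assms]] sum.cartesian_product
  by (simp add: comp_def case_prod_unfold)

definition coord_set :: "nat \<Rightarrow> 'a::zero set" where
  "coord_set b = (if b = 1 then {0} else UNIV)"

definition card_poly :: "nat \<Rightarrow> int poly" where
  "card_poly b = (if b = 1 then 1 else [:0, 1:])"

definition prod_solutions_poly :: "nat \<Rightarrow> nat \<Rightarrow> int poly" where
  "prod_solutions_poly b b' = (if b = 1 \<or> b' = 1 then 0 else [:-1, 1:])"

definition prod_zero_excess_poly :: "nat \<Rightarrow> nat \<Rightarrow> int poly" where
  "prod_zero_excess_poly b b' = (if b = 1 \<and> b' = 1 then 1 else [:0, 1:])"

lemma mem_coord_set: "u \<in> coord_set b \<longleftrightarrow> (b = 1 \<longrightarrow> u = 0)"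
  by (simp add: coord_set_def)

lemma poly_card_poly:
  "poly (card_poly b) (int CARD('a)) = int (card (coord_set b :: 'a::{finite,zero} set))"
  by (simp add: card_poly_def coord_set_def)

lemma sum_of_bool_mult_eq:
  fixes c :: "'a::{finite,field}"
  shows "(\<Sum>u\<in>UNIV. \<Sum>v\<in>UNIV. of_bool (u * v = c) :: int)
       = (int CARD('a) - 1) + int CARD('a) * of_bool (c = 0)"
proof -
  have row: "(\<Sum>v\<in>UNIV. of_bool (u * v = c) :: int) = (if u = 0 then int CARD('a) * of_bool (c = 0) else 1)"
    for u :: 'a
  proof (cases "u = 0")
    case False
    then have "UNIV \<inter> {v. u * v = c} = {c / u}" by (auto simp: field_simps)
    with False show ?thesis by simp
  qed (simp add: eq_commute[of 0 c])
  have "(\<Sum>u\<in>UNIV. \<Sum>v\<in>UNIV. of_bool (u * v = c) :: int)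
      = int CARD('a) * of_bool (c = 0) + (\<Sum>u\<in>UNIV - {0::'a}. 1)"
    by (simp add: row sum.remove[of UNIV 0])
  then show ?thesis by (simp add: card_Diff_singleton of_nat_diff)
qed

lemma sum_coord_sets_of_bool_mult_eq:
  fixes c :: "'a::{finite,field}"
  defines "q \<equiv> int CARD('a)"
  shows "(\<Sum>u\<in>coord_set b. \<Sum>v\<in>coord_set b'. of_bool (u * v = c) :: int)
       = poly (prod_solutions_poly b b') q + poly (prod_zero_excess_poly b b') q * of_bool (c = 0)"
  using sum_of_bool_mult_eq[of c]
  by (auto simp: q_def coord_set_def prod_solutions_poly_def prod_zero_excess_poly_def eq_commute[of 0 c])

lemma sum_coord_sets_affine:
  fixes c :: "'a::{finite,field}"
  defines "q \<equiv> int CARD('a)"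
  shows "(\<Sum>u\<in>coord_set b. \<Sum>v\<in>coord_set b'. A + B * of_bool (u * v = c) :: int)
       = poly (card_poly b) q * poly (card_poly b') q * A
         + B * (poly (prod_solutions_poly b b') q + poly (prod_zero_excess_poly b b') q * of_bool (c = 0))"
  unfolding q_def poly_card_poly sum_coord_sets_of_bool_mult_eq[symmetric]
  by (simp add: sum.distrib sum_distrib_left del: sum_of_bool_eq)

definition quadric_count_poly :: "(nat \<Rightarrow> nat) \<Rightarrow> int poly" where
  "quadric_count_poly n = card_poly (n 0) *
     (card_poly (n 1) * card_poly (n 4) *
        (card_poly (n 2) * card_poly (n 5) * prod_solutions_poly (n 3) (n 6)
         + prod_zero_excess_poly (n 3) (n 6) * prod_solutions_poly (n 2) (n 5))
      + prod_zero_excess_poly (n 3) (n 6) * prod_zero_excess_poly (n 2) (n 5)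
        * (prod_solutions_poly (n 1) (n 4) + prod_zero_excess_poly (n 1) (n 4)))"

lemma card_quadric_points:
  defines "q \<equiv> int CARD('a::{finite,field})"
  shows "int (card {x \<in> {0..<7} \<rightarrow>\<^sub>E (UNIV :: 'a set).
                  (\<forall>i<7. n i = 1 \<longrightarrow> x i = 0) \<and> x 1 * x 4 + x 2 * x 5 + x 3 * x 6 = 0})
       = poly (quadric_count_poly n) q"
proof -
  let ?Z = "\<lambda>i. coord_set (n i) :: 'a set"
  let ?card = "\<lambda>i. poly (card_poly (n i)) q"
  let ?\<alpha> = "\<lambda>i j. poly (prod_solutions_poly (n i) (n j)) q"
  let ?\<beta> = "\<lambda>i j. poly (prod_zero_excess_poly (n i) (n j)) q"
  \<comment> \<open>Ordering the coordinates as \<open>x\<^sub>0, (x\<^sub>1, y\<^sub>1), (x\<^sub>2, y\<^sub>2), (x\<^sub>3, y\<^sub>3)\<close> lets the products be summed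
      out one pair at a time, innermost first.\<close>
  have "{x \<in> {0..<7} \<rightarrow>\<^sub>E (UNIV :: 'a set). (\<forall>i<7. n i = 1 \<longrightarrow> x i = 0) \<and> x 1 * x 4 + x 2 * x 5 + x 3 * x 6 = 0}
      = Pi\<^sub>E {0, 1, 4, 2, 5, 3, 6} ?Z \<inter> {x. x 1 * x 4 + x 2 * x 5 + x 3 * x 6 = 0}"
  proof -
    have iff: "x \<in> Pi\<^sub>E {0..<7} ?Z \<longleftrightarrow> x \<in> {0..<7} \<rightarrow>\<^sub>E UNIV \<and> (\<forall>i<7. n i = 1 \<longrightarrow> x i = 0)" for x
      by (auto simp: PiE_iff mem_coord_set)
    have dom: "{0..<7} = {0, 1, 4, 2, 5, 3, 6::nat}" by auto
    show ?thesis
      unfolding dom[symmetric] set_eq_iff Int_iff mem_Collect_eq iff by simp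
  qed
  then have "int (card {x \<in> {0..<7} \<rightarrow>\<^sub>E (UNIV :: 'a set).
                  (\<forall>i<7. n i = 1 \<longrightarrow> x i = 0) \<and> x 1 * x 4 + x 2 * x 5 + x 3 * x 6 = 0})
      = (\<Sum>x\<in>Pi\<^sub>E {0, 1, 4, 2, 5, 3, 6} ?Z. of_bool (x 1 * x 4 + x 2 * x 5 + x 3 * x 6 = 0))"
    by (simp add: finite_PiE)
  also have "\<dots> = (\<Sum>x0\<in>?Z 0. \<Sum>x1\<in>?Z 1. \<Sum>x4\<in>?Z 4. \<Sum>x2\<in>?Z 2. \<Sum>x5\<in>?Z 5. \<Sum>x3\<in>?Z 3. \<Sum>x6\<in>?Z 6.
            of_bool (x1 * x4 + x2 * x5 + x3 * x6 = 0))"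
    by (simp add: sum_PiE_insert del: sum_of_bool_eq)
  also have "\<dots> = (\<Sum>x0\<in>?Z 0. \<Sum>x1\<in>?Z 1. \<Sum>x4\<in>?Z 4. \<Sum>x2\<in>?Z 2. \<Sum>x5\<in>?Z 5.
            ?\<alpha> 3 6 + ?\<beta> 3 6 * of_bool (x2 * x5 = - (x1 * x4)))"
    by (simp only: add_eq_0_iff sum_coord_sets_of_bool_mult_eq neg_equal_0_iff_equal q_def)
  also have "\<dots> = (\<Sum>x0\<in>?Z 0. \<Sum>x1\<in>?Z 1. \<Sum>x4\<in>?Z 4.
            (?card 2 * ?card 5 * ?\<alpha> 3 6 + ?\<beta> 3 6 * ?\<alpha> 2 5) + ?\<beta> 3 6 * ?\<beta> 2 5 * of_bool (x1 * x4 = 0))"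
    by (simp only: sum_coord_sets_affine neg_equal_0_iff_equal q_def distrib_left add.assoc mult.assoc)
  also have "\<dots> = poly (quadric_count_poly n) q"
    by (simp only: sum_coord_sets_affine q_def)
       (simp add: quadric_count_poly_def q_def poly_card_poly algebra_simps)
  finally show ?thesis .
qed

definition dens_poly :: "(nat \<Rightarrow> nat) \<Rightarrow> int poly" where
  "dens_poly n = monom 1 4 * [:-1, 0, 1:] * quadric_count_poly n"

lemma densS_eq_poly:
  fixes K :: "'a::{finite,field} itself"
  defines "q \<equiv> real CARD('a)"
  shows "(q ^ 12 - q ^ 10) * densS K n = of_int (poly (dens_poly n) (int CARD('a)))"
proof -
  have "q \<noteq> 0" by (simp add: q_def)
  then have scale: "(q ^ 12 - q ^ 10) * q powi (-6) = q ^ 4 * (q ^ 2 - 1)"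
    by (simp add: power_int_minus field_simps flip: power_add)
  have "(q ^ 12 - q ^ 10) * densS K n
      = ((q ^ 12 - q ^ 10) * q powi (-6)) * of_int (poly (quadric_count_poly n) (int CARD('a)))"
    unfolding densS_def card_quadric_points[symmetric] q_def by (simp only: mult.assoc of_int_of_nat_eq)
  also have "\<dots> = of_int (poly (dens_poly n) (int CARD('a)))"
    unfolding scale by (simp add: dens_poly_def poly_monom power2_eq_square algebra_simps q_def)
  finally show ?thesis .
qed

section \<open>Bit vectors and the Moebius function \<open>\<mu>\<^sup>0\<^sub>S\<close>\<close>

definition of_bits :: "bool list \<Rightarrow> nat \<Rightarrow> nat" where
  "of_bits bs i = of_bool (i < length bs \<and> bs ! i)"

definition to_bits :: "(nat \<Rightarrow> nat) \<Rightarrow> bool list" where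
  "to_bits n = map (\<lambda>i. n i = 1) [0..<7]"

lemma length_to_bits [simp]: "length (to_bits n) = 7"
  by (simp add: to_bits_def)

lemma of_bits_in_B7: "length bs = 7 \<Longrightarrow> of_bits bs \<in> B7"
  by (auto simp: B7_def of_bits_def)

lemma of_bits_to_bits: "n \<in> B7 \<Longrightarrow> of_bits (to_bits n) = n"
proof
  fix i assume "n \<in> B7"
  then show "of_bits (to_bits n) i = n i"
    by (cases "i < 7") (auto simp: of_bits_def to_bits_def B7_def)
qed

lemma to_bits_of_bits: "length bs = 7 \<Longrightarrow> to_bits (of_bits bs) = bs"
  by (auto simp: to_bits_def of_bits_def intro!: nth_equalityI)

lemma sum_B7_eq_sum_list: "(\<Sum>n\<in>B7. h n) = (\<Sum>bs\<leftarrow>List.n_lists 7 [False, True]. h (of_bits bs))"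
proof -
  have bits: "set (List.n_lists 7 [False, True]) = {bs. length bs = 7}"
    by (auto simp: set_n_lists)
  have image: "B7 = of_bits ` {bs. length bs = 7}"
  proof (intro equalityI subsetI)
    fix n assume "n \<in> B7"
    then show "n \<in> of_bits ` {bs. length bs = 7}"
      by (intro image_eqI[of _ _ "to_bits n"]) (simp_all add: of_bits_to_bits)
  qed (auto simp: of_bits_in_B7)
  have inj: "inj_on of_bits {bs. length bs = 7}"
    by (rule inj_on_inverseI[where g = to_bits]) (simp add: to_bits_of_bits)
  have "(\<Sum>n\<in>B7. h n) = (\<Sum>bs\<in>set (List.n_lists 7 [False, True]). h (of_bits bs))"
    unfolding image bits by (simp add: sum.reindex[OF inj])
  also have "\<dots> = (\<Sum>bs\<leftarrow>List.n_lists 7 [False, True]. h (of_bits bs))"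
    by (simp add: sum_list_distinct_conv_sum_set distinct_n_lists)
  finally show ?thesis .
qed

abbreviation bits_le :: "bool list \<Rightarrow> bool list \<Rightarrow> bool" where
  "bits_le cs bs \<equiv> list_all2 (\<lambda>c b. c \<longrightarrow> b) cs bs"

fun zeta_transform :: "(bool list \<Rightarrow> 'a::ab_group_add) \<Rightarrow> bool list \<Rightarrow> 'a" where
  "zeta_transform f [] = f []"
| "zeta_transform f (b # bs) =
     (if b then zeta_transform (\<lambda>cs. f (False # cs)) bs + zeta_transform (\<lambda>cs. f (True # cs)) bs
      else zeta_transform (\<lambda>cs. f (False # cs)) bs)"

fun moebius_transform :: "(bool list \<Rightarrow> 'a::ab_group_add) \<Rightarrow> bool list \<Rightarrow> 'a" where
  "moebius_transform f [] = f []"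
| "moebius_transform f (b # bs) =
     (if b then moebius_transform (\<lambda>cs. f (True # cs)) bs - moebius_transform (\<lambda>cs. f (False # cs)) bs
      else moebius_transform (\<lambda>cs. f (False # cs)) bs)"

lemma zeta_transform_diff: "zeta_transform (\<lambda>cs. f cs - g cs) bs = zeta_transform f bs - zeta_transform g bs"
  by (induction bs arbitrary: f g) auto

lemma moebius_transform_add:
  "moebius_transform (\<lambda>cs. f cs + g cs) bs = moebius_transform f bs + moebius_transform g bs"
  by (induction bs arbitrary: f g) auto

lemma zeta_transform_moebius_transform: "zeta_transform (moebius_transform f) bs = f bs"
proof (induction bs arbitrary: f)
  case (Cons b bs)
  have "(\<lambda>cs. moebius_transform f (False # cs)) = moebius_transform (\<lambda>cs. f (False # cs))"
    and "(\<lambda>cs. moebius_transform f (True # cs))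
         = (\<lambda>cs. moebius_transform (\<lambda>cs. f (True # cs)) cs - moebius_transform (\<lambda>cs. f (False # cs)) cs)"
    by auto
  with Cons show ?case by (simp add: zeta_transform_diff)
qed simp

lemma moebius_transform_zeta_transform: "moebius_transform (zeta_transform f) bs = f bs"
proof (induction bs arbitrary: f)
  case (Cons b bs)
  have "(\<lambda>cs. zeta_transform f (False # cs)) = zeta_transform (\<lambda>cs. f (False # cs))"
    and "(\<lambda>cs. zeta_transform f (True # cs))
         = (\<lambda>cs. zeta_transform (\<lambda>cs. f (False # cs)) cs + zeta_transform (\<lambda>cs. f (True # cs)) cs)"
    by auto
  with Cons show ?case by (simp add: moebius_transform_add)
qed simp

lemma zeta_transform_cong:
  "(\<And>cs. length cs = length bs \<Longrightarrow> f cs = g cs) \<Longrightarrow> zeta_transform f bs = zeta_transform g bs"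
proof (induction bs arbitrary: f g)
  case (Cons b bs)
  have "zeta_transform (\<lambda>cs. f (c # cs)) bs = zeta_transform (\<lambda>cs. g (c # cs)) bs" for c
    by (rule Cons.IH) (simp add: Cons.prems)
  then show ?case by simp
qed simp

lemma moebius_transform_cong:
  "(\<And>cs. length cs = length bs \<Longrightarrow> f cs = g cs) \<Longrightarrow> moebius_transform f bs = moebius_transform g bs"
proof (induction bs arbitrary: f g)
  case (Cons b bs)
  have "moebius_transform (\<lambda>cs. f (c # cs)) bs = moebius_transform (\<lambda>cs. g (c # cs)) bs" for c
    by (rule Cons.IH) (simp add: Cons.prems)
  then show ?case by simp
qed simp

lemma finite_bits_le: "finite {cs. bits_le cs bs}"
proof (rule finite_subset)
  show "{cs. bits_le cs bs} \<subseteq> {cs. set cs \<subseteq> {False, True} \<and> length cs = length bs}"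
    by (auto dest: list_all2_lengthD)
qed (rule finite_lists_length_eq, simp)

lemma zeta_transform_eq_sum: "zeta_transform f bs = (\<Sum>cs | bits_le cs bs. f cs)"
proof (induction bs arbitrary: f)
  case (Cons b bs)
  let ?L = "{cs. bits_le cs bs}"
  have reindex: "(\<Sum>cs\<in>Cons c ` ?L. f cs) = (\<Sum>cs\<in>?L. f (c # cs))" for c
    by (subst sum.reindex) (auto simp: inj_on_def)
  show ?case
  proof (cases b)
    case True
    then have "{cs. bits_le cs (b # bs)} = Cons False ` ?L \<union> Cons True ` ?L"
      by (auto simp: list_all2_Cons2)
    moreover have "(\<Sum>cs\<in>Cons False ` ?L \<union> Cons True ` ?L. f cs)
        = (\<Sum>cs\<in>Cons False ` ?L. f cs) + (\<Sum>cs\<in>Cons True ` ?L. f cs)"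
      by (rule sum.union_disjoint) (use finite_bits_le in auto)
    ultimately show ?thesis using True Cons by (simp add: reindex)
  next
    case False
    then have "{cs. bits_le cs (b # bs)} = Cons False ` ?L"
      by (auto simp: list_all2_Cons2)
    then show ?thesis using False Cons by (simp add: reindex)
  qed
qed simp

lemma down_set_B7_eq_image:
  assumes n: "n \<in> B7"
  shows "{m \<in> B7. \<forall>i. m i \<le> n i} = of_bits ` {cs. bits_le cs (to_bits n)}"
proof (intro equalityI subsetI)
  fix m assume "m \<in> {m \<in> B7. \<forall>i. m i \<le> n i}"
  then have m: "m \<in> B7" and le: "\<And>i. m i \<le> n i" by auto
  have "m i = 1 \<longrightarrow> n i = 1" if "i < 7" for i
    using le[of i] n that by (auto simp: B7_def)
  then have "bits_le (to_bits m) (to_bits n)"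
    by (simp add: list_all2_conv_all_nth to_bits_def)
  moreover have "m = of_bits (to_bits m)" using m by (simp add: of_bits_to_bits)
  ultimately show "m \<in> of_bits ` {cs. bits_le cs (to_bits n)}" by blast
next
  fix m assume "m \<in> of_bits ` {cs. bits_le cs (to_bits n)}"
  then obtain cs where cs: "bits_le cs (to_bits n)" and m: "m = of_bits cs" by blast
  have len: "length cs = 7" using list_all2_lengthD[OF cs] by simp
  have "of_bits cs i \<le> n i" for i
  proof (cases "i < 7")
    case True
    then have "cs ! i \<longrightarrow> n i = 1" using cs len by (simp add: list_all2_conv_all_nth to_bits_def)
    then show ?thesis using True len by (auto simp: of_bits_def)
  qed (simp add: of_bits_def len)
  then show "m \<in> {m \<in> B7. \<forall>i. m i \<le> n i}" using of_bits_in_B7[OF len] m by blast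
qed

lemma sum_down_set_B7_eq_zeta_transform:
  assumes n: "n \<in> B7"
  shows "(\<Sum>m\<in>{m \<in> B7. \<forall>i. m i \<le> n i}. \<mu> m) = zeta_transform (\<lambda>cs. \<mu> (of_bits cs)) (to_bits n)"
proof -
  have "inj_on of_bits {cs. bits_le cs (to_bits n)}"
    by (rule inj_on_inverseI[where g = to_bits]) (auto simp: to_bits_of_bits dest: list_all2_lengthD)
  then show ?thesis
    unfolding down_set_B7_eq_image[OF n] zeta_transform_eq_sum by (simp add: sum.reindex)
qed

text \<open>The seven forms of \<open>B7S\<close> with the bits ordered \<open>e\<^sub>0, e\<^sub>1, e\<^sub>2, e\<^sub>3, f\<^sub>1, f\<^sub>2, f\<^sub>3\<close>; a form vanishes at a
  \<open>0/1\<close>-point iff all of its variables are \<open>0\<close>. Unlike \<open>B7S\<close> itself, this is cheap to evaluate.\<close>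
fun form_vanishes_bits :: "bool list \<Rightarrow> bool" where
  "form_vanishes_bits [e0, e1, e2, e3, f1, f2, f3] \<longleftrightarrow>
     \<not> (e2 \<or> e3 \<or> f1 \<or> f2 \<or> f3) \<or> \<not> (e1 \<or> e3 \<or> f1 \<or> f2 \<or> f3) \<or> \<not> (e1 \<or> e2 \<or> f1 \<or> f2 \<or> f3) \<or>
     \<not> (e0 \<or> e2 \<or> f2 \<or> e3 \<or> f3) \<or> \<not> (e0 \<or> e1 \<or> f1 \<or> e3 \<or> f3) \<or> \<not> (e0 \<or> e1 \<or> f1 \<or> e2 \<or> f2) \<or>
     \<not> (e0 \<or> e1 \<or> e2 \<or> e3)"
| "form_vanishes_bits _ = False"

lemma of_bits_mem_B7S_iff:
  assumes "length cs = 7"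
  shows "of_bits cs \<in> B7S \<longleftrightarrow> form_vanishes_bits cs"
proof -
  obtain e0 e1 e2 e3 f1 f2 f3 where cs: "cs = [e0, e1, e2, e3, f1, f2, f3]"
    using assms by (auto simp: length_Suc_conv numeral_eq_Suc)
  have "min a b = 0 \<longleftrightarrow> a = 0 \<or> b = 0" for a b :: nat by auto
  then show ?thesis
    using of_bits_in_B7[OF assms]
    by (simp add: cs B7S_def formA_def formB_def formC_def of_bits_def insert_Diff_if)
qed

definition mu_bits :: "bool list \<Rightarrow> int" where
  "mu_bits = moebius_transform (\<lambda>cs. of_bool (form_vanishes_bits cs))"

definition inverts_B7S_indicator :: "((nat \<Rightarrow> nat) \<Rightarrow> int) \<Rightarrow> bool" where
  "inverts_B7S_indicator \<mu> \<longleftrightarrow> (\<forall>n. n \<notin> B7 \<longrightarrow> \<mu> n = 0) \<and>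
     (\<forall>n\<in>B7. (if n \<in> B7S then 1 else 0) = (\<Sum>m\<in>{m \<in> B7. \<forall>i. m i \<le> n i}. \<mu> m))"

lemma inverts_B7S_indicator_mu_bits:
  "inverts_B7S_indicator (\<lambda>n. if n \<in> B7 then mu_bits (to_bits n) else 0)"
proof -
  have "(if n \<in> B7S then 1 else 0)
      = (\<Sum>m\<in>{m \<in> B7. \<forall>i. m i \<le> n i}. if m \<in> B7 then mu_bits (to_bits m) else 0)"
    if n: "n \<in> B7" for n
  proof -
    have "(\<Sum>m\<in>{m \<in> B7. \<forall>i. m i \<le> n i}. if m \<in> B7 then mu_bits (to_bits m) else 0)
        = zeta_transform mu_bits (to_bits n)"
      unfolding sum_down_set_B7_eq_zeta_transform[OF n]
      by (rule zeta_transform_cong) (simp add: of_bits_in_B7 to_bits_of_bits)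
    then show ?thesis
      using of_bits_mem_B7S_iff[of "to_bits n"]
      by (simp add: mu_bits_def zeta_transform_moebius_transform of_bits_to_bits[OF n])
  qed
  then show ?thesis by (simp add: inverts_B7S_indicator_def)
qed

lemma inverts_B7S_indicator_unique:
  assumes \<mu>: "inverts_B7S_indicator \<mu>" and n: "n \<in> B7"
  shows "\<mu> n = mu_bits (to_bits n)"
proof -
  have "\<mu> n = moebius_transform (zeta_transform (\<lambda>cs. \<mu> (of_bits cs))) (to_bits n)"
    by (simp add: moebius_transform_zeta_transform of_bits_to_bits[OF n])
  also have "\<dots> = mu_bits (to_bits n)"
    unfolding mu_bits_def
  proof (rule moebius_transform_cong)
    fix cs :: "bool list" assume "length cs = length (to_bits n)"
    then have len: "length cs = 7" by simp
    have "zeta_transform (\<lambda>cs. \<mu> (of_bits cs)) cs = (\<Sum>m\<in>{m \<in> B7. \<forall>i. m i \<le> of_bits cs i}. \<mu> m)"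
      by (simp add: sum_down_set_B7_eq_zeta_transform[OF of_bits_in_B7[OF len]] to_bits_of_bits[OF len])
    also have "\<dots> = (if of_bits cs \<in> B7S then 1 else 0)"
      using \<mu> of_bits_in_B7[OF len] by (simp add: inverts_B7S_indicator_def)
    also have "\<dots> = of_bool (form_vanishes_bits cs)"
      by (simp add: of_bits_mem_B7S_iff[OF len])
    finally show "zeta_transform (\<lambda>cs. \<mu> (of_bits cs)) cs = of_bool (form_vanishes_bits cs)" .
  qed
  finally show ?thesis .
qed

lemma mu0S_eq: "mu0S = (\<lambda>n. if n \<in> B7 then mu_bits (to_bits n) else 0)"
proof -
  have "mu0S = (THE \<mu>. inverts_B7S_indicator \<mu>)"
    by (simp add: mu0S_def inverts_B7S_indicator_def)
  also have "\<dots> = (\<lambda>n. if n \<in> B7 then mu_bits (to_bits n) else 0)"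
  proof (rule the_equality[where P = inverts_B7S_indicator, OF inverts_B7S_indicator_mu_bits])
    fix \<mu> assume "inverts_B7S_indicator \<mu>"
    then show "\<mu> = (\<lambda>n. if n \<in> B7 then mu_bits (to_bits n) else 0)"
      using inverts_B7S_indicator_unique by (auto simp: inverts_B7S_indicator_def)
  qed
  finally show ?thesis .
qed

lemma mu0S_of_bits: "length bs = 7 \<Longrightarrow> mu0S (of_bits bs) = mu_bits bs"
  by (simp add: mu0S_eq of_bits_in_B7 to_bits_of_bits)

lemma poly_sum_list_map: "poly (\<Sum>x\<leftarrow>xs. f x) y = (\<Sum>x\<leftarrow>xs. poly (f x) y)"
  by (induction xs) simp_all

lemma scaled_sum_B7_eq_poly:
  assumes "\<And>n. n \<in> B7 \<Longrightarrow> c * g n = of_int (poly (p n) x)"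
  shows "c * (\<Sum>n\<in>B7. real_of_int (mu0S n) * g n)
       = of_int (poly (\<Sum>bs\<leftarrow>List.n_lists 7 [False, True]. smult (mu_bits bs) (p (of_bits bs))) x)"
proof -
  have "c * (real_of_int (mu0S (of_bits bs)) * g (of_bits bs)) = of_int (poly (smult (mu_bits bs) (p (of_bits bs))) x)"
    if "bs \<in> set (List.n_lists 7 [False, True])" for bs
  proof -
    from that have len: "length bs = 7" by (simp add: length_n_lists_elem)
    show ?thesis
      using assms[OF of_bits_in_B7[OF len]] by (simp add: mu0S_of_bits[OF len] mult.left_commute)
  qed
  then have "(\<Sum>bs\<leftarrow>List.n_lists 7 [False, True]. c * (real_of_int (mu0S (of_bits bs)) * g (of_bits bs)))
      = (\<Sum>bs\<leftarrow>List.n_lists 7 [False, True]. of_int (poly (smult (mu_bits bs) (p (of_bits bs))) x))"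
    by (intro arg_cong[where f = sum_list] map_cong) simp_all
  then show ?thesis
    unfolding sum_B7_eq_sum_list sum_list_const_mult[symmetric] poly_sum_list_map
    by (simp add: sum_list_of_int[symmetric] comp_def)
qed

lemma moebius_sums_agree:
  "(\<Sum>bs\<leftarrow>List.n_lists 7 [False, True]. smult (mu_bits bs) (fact_poly (of_bits bs)))
 = (\<Sum>bs\<leftarrow>List.n_lists 7 [False, True].
      smult (mu_bits bs) (dens_poly (of_bits bs)))"
  by code_simp

theorem mainTheorem13:
  fixes K :: "'a::{finite,field} itself"
  shows "(\<Sum>n\<in>B7. real_of_int (mu0S n) * factv CARD('a) n)
       = (\<Sum>n\<in>B7. real_of_int (mu0S n) * densS K n)"
proof -
  let ?q = "real CARD('a)"
  have "2 \<le> CARD('a)"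
    using card_mono[of UNIV "{0::'a, 1}"] by simp
  then have "?q ^ 10 < ?q ^ 12"
    by (intro power_strict_increasing) auto
  then have nonzero: "?q ^ 12 - ?q ^ 10 \<noteq> 0"
    by simp
  have fact: "(?q ^ 12 - ?q ^ 10) * (\<Sum>n\<in>B7. real_of_int (mu0S n) * factv CARD('a) n)
      = of_int (poly (\<Sum>bs\<leftarrow>List.n_lists 7 [False, True]. smult (mu_bits bs) (fact_poly (of_bits bs))) (int CARD('a)))"
    by (rule scaled_sum_B7_eq_poly) (rule factv_eq_poly[OF \<open>2 \<le> CARD('a)\<close>])
  have dens: "(?q ^ 12 - ?q ^ 10) * (\<Sum>n\<in>B7. real_of_int (mu0S n) * densS K n)
      = of_int (poly (\<Sum>bs\<leftarrow>List.n_lists 7 [False, True].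
                smult (mu_bits bs) (dens_poly (of_bits bs))) (int CARD('a)))"
    by (rule scaled_sum_B7_eq_poly) (rule densS_eq_poly)
  have "(?q ^ 12 - ?q ^ 10) * (\<Sum>n\<in>B7. real_of_int (mu0S n) * factv CARD('a) n)
      = (?q ^ 12 - ?q ^ 10) * (\<Sum>n\<in>B7. real_of_int (mu0S n) * densS K n)"
    unfolding fact dens moebius_sums_agree ..
  with nonzero show ?thesis by simp
qed

end
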